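(* Let $(v_1,\dots,v_r)$ be a directed path in $H$ with $d(v_r)\ge1$. Let $Y=s(v_1)E_1\,s(v_2)E_2\cdots s(v_r)E_r$, where for $1\le i<r$, $E_i$ is the concatenation of all strings $e(v_i,w)$, $w$ ranging over the out-neighbors of $v_i$, listed in cyclic order and ending with $e(v_i,v_{i+1})$, and $E_r$ is the concatenation of all strings $e(v_r,w)$ listed in cyclic order starting from an arbitrary out-neighbor. Then the LZ77 parsing of $Y$ has exactly $3r+1+\sum_{i=1}^r d(v_i)$ phrases.
   Context: $H$ is a directed graph without loops in which no vertex has outdegree exactly 1; $d(v)$ denotes the outdegree of $v$. For each vertex $v$ introduce three symbols $v$, $v'$, $\$_v$; all these symbols are pairwise distinct (over all vertices). For a vertex $v$ with outdegree $d=d(v)\ge 1$, let $w_0,\dots,w_{d-1}$ be its out-neighbors in a fixed cyclic order (indices mod $d$); "cyclic order" refers to this order. Define $e(v,w_i)=(v'w_{i-1})^4v'w_i$ for $0\le i<d$ and $s(v)=v^4(v')^5\$_v$. LZ77 parsing of a string $z$: $z=z_1z_2\cdots z_t$ where, once $z_1,\dots,z_{i-1}$ are determined and the remaining suffix is nonempty, $z_i$ is the longest nonempty prefix $u$ of the remaining suffix such that $u^-$ ($u$ with its last symbol deleted) has an occurrence in $z$ starting at a position strictly smaller than the starting position of $u$ (the empty string always qualifies). The $z_i$ are the phrases. *)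

theory Defs
  imports Main
begin

text \<open>Symbols: for each vertex v the three symbols v, v' and $_v, pairwise distinct.\<close>
datatype 'v sym = Vx 'v | Pr 'v | Dl 'v

text \<open>The graph H is given by out-neighbour lists: N v lists the out-neighbours of v
  in the fixed cyclic order w_0, ..., w_{d-1}; d(v) = length (N v).\<close>

definition outdeg :: "('v \<Rightarrow> 'v list) \<Rightarrow> 'v \<Rightarrow> nat" where
  "outdeg N v = length (N v)"

definition e_str :: "('v \<Rightarrow> 'v list) \<Rightarrow> 'v \<Rightarrow> nat \<Rightarrow> 'v sym list" where
  "e_str N v i = (let d = length (N v) in
      concat (replicate 4 [Pr v, Vx (N v ! ((i + d - 1) mod d))]) @ [Pr v, Vx (N v ! (i mod d))])"

definition s_str :: "'v \<Rightarrow> 'v sym list" where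
  "s_str v = replicate 4 (Vx v) @ replicate 5 (Pr v) @ [Dl v]"

definition E_block :: "('v \<Rightarrow> 'v list) \<Rightarrow> 'v \<Rightarrow> nat \<Rightarrow> 'v sym list" where
  "E_block N v start = concat (map (\<lambda>t. e_str N v ((start + t) mod length (N v))) [0..<length (N v)])"

definition nb_index :: "('v \<Rightarrow> 'v list) \<Rightarrow> 'v \<Rightarrow> 'v \<Rightarrow> nat" where
  "nb_index N v w = (THE k. k < length (N v) \<and> N v ! k = w)"

text \<open>Y = s(v_1) E_1 ... s(v_r) E_r; E_i (i<r) ends with e(v_i, v_{i+1}), i.e. starts right
  after the index of v_{i+1}; E_r starts at the (arbitrary) index j.\<close>
definition Y_str :: "('v \<Rightarrow> 'v list) \<Rightarrow> 'v list \<Rightarrow> nat \<Rightarrow> 'v sym list" where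
  "Y_str N vs j = concat (map (\<lambda>i. s_str (vs ! i) @
      (if Suc i < length vs then E_block N (vs ! i) (Suc (nb_index N (vs ! i) (vs ! Suc i)))
       else E_block N (vs ! i) j)) [0..<length vs])"

text \<open>A prefix of length l of the suffix starting at p qualifies if l \<ge> 1 and either l = 1
  (u^- empty) or u^- occurs in z at some position q < p (overlaps allowed).\<close>
definition lz_qualifies :: "'a list \<Rightarrow> nat \<Rightarrow> nat \<Rightarrow> bool" where
  "lz_qualifies z p l \<longleftrightarrow> 1 \<le> l \<and> p + l \<le> length z \<and>
     (l = 1 \<or> (\<exists>q<p. q + (l - 1) \<le> length z \<and> take (l - 1) (drop q z) = take (l - 1) (drop p z)))"

definition phrase_len :: "'a list \<Rightarrow> nat \<Rightarrow> nat" where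
  "phrase_len z p = (GREATEST l. lz_qualifies z p l)"

lemma phrase_len_pos: "p < length z \<Longrightarrow> 1 \<le> phrase_len z p"
proof -
  assume "p < length z"
  then have "lz_qualifies z p 1" by (simp add: lz_qualifies_def)
  moreover have "\<forall>y. lz_qualifies z p y \<longrightarrow> y \<le> length z" by (auto simp: lz_qualifies_def)
  ultimately have "lz_qualifies z p (GREATEST l. lz_qualifies z p l)" by (metis GreatestI_nat)
  then show ?thesis by (simp add: phrase_len_def lz_qualifies_def)
qed

function lz77_from :: "'a list \<Rightarrow> nat \<Rightarrow> 'a list list" where
  "lz77_from z p = (if length z \<le> p then []
     else take (phrase_len z p) (drop p z) # lz77_from z (p + phrase_len z p))"
  by pat_completeness auto
termination
proof (relation "measure (\<lambda>(z, p). length z - p)")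
  show "wf (measure (\<lambda>(z, p). length z - p))" by simp
next
  fix z :: "'a list" and p :: nat
  assume "\<not> length z \<le> p"
  then have "p < length z" by simp
  then have "1 \<le> phrase_len z p" by (rule phrase_len_pos)
  with \<open>p < length z\<close> show "((z, p + phrase_len z p), (z, p)) \<in> measure (\<lambda>(z, p). length z - p)"
    by simp
qed

definition lz77 :: "'a list \<Rightarrow> 'a list list" where
  "lz77 z = lz77_from z 0"

end

theory Submission
  imports Defs
begin

(* Y is parsed block by block, each block s(v) E independently of what precedes it, because v'
   and $_v do not occur before it.  Within s(v) the phrases are v, v^3 v', (v')^4 $_v for the first
   block, and v^4 v', (v')^4 $_v for the later ones, which are preceded by the symbol v.  Within
   E = e(v,w_i) e(v,w_(i+1)) ... the phrases are v' w_(i-1), then (v' w_(i-1))^3 v' w_i, and then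
   each further e(v,w) is a single phrase copied from two positions back.  No phrase inside E
   extends past the end of a string e(v,w_k), since the triple w_(k-1) v' w_k occurs nowhere
   before it; this needs w_(k-1) <> w_k, i.e. outdegree at least 2.  Hence the block of v
   contributes d(v) + 3 phrases, and the first block one more. *)

lemma lz_qualifies_mono:
  assumes "lz_qualifies z p l" and "1 \<le> l'" and "l' \<le> l"
  shows "lz_qualifies z p l'"
proof (cases "l' = 1")
  case True
  then show ?thesis using assms by (auto simp: lz_qualifies_def)
next
  case False
  with assms obtain q where q: "q < p" "q + (l - 1) \<le> length z"
    and eq: "take (l - 1) (drop q z) = take (l - 1) (drop p z)"
    by (auto simp: lz_qualifies_def)
  have "take (l' - 1) (drop q z) = take (l' - 1) (drop p z)"
    using arg_cong[OF eq, of "take (l' - 1)"] assms(3) by (simp add: min_absorb1)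
  then show ?thesis
    using assms q unfolding lz_qualifies_def by (intro conjI disjI2 exI[of _ q]) auto
qed

lemma phrase_len_eqI:
  assumes "lz_qualifies z p l" and "\<not> lz_qualifies z p (Suc l)"
  shows "phrase_len z p = l"
  unfolding phrase_len_def
proof (rule Greatest_equality)
  fix l' assume "lz_qualifies z p l'"
  then show "l' \<le> l"
    using lz_qualifies_mono[of z p l' "Suc l"] assms(2) by (cases "l' \<le> l") auto
qed fact

lemma lz_qualifiesI:
  assumes "q < p" and "p + l \<le> length z" and "1 \<le> l"
    and "\<And>i. i < l - 1 \<Longrightarrow> z ! (q + i) = z ! (p + i)"
  shows "lz_qualifies z p l"
proof -
  have "take (l - 1) (drop q z) = take (l - 1) (drop p z)"
    by (rule nth_equalityI) (use assms in auto)
  then show ?thesis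
    using assms unfolding lz_qualifies_def by (intro conjI disjI2 exI[of _ q]) auto
qed

lemma not_lz_qualifiesI:
  assumes "1 \<le> l"
    and "\<And>q. q < p \<Longrightarrow> q + l \<le> length z \<Longrightarrow> p + l \<le> length z \<Longrightarrow>
           \<exists>i<l. z ! (q + i) \<noteq> z ! (p + i)"
  shows "\<not> lz_qualifies z p (Suc l)"
proof
  assume "lz_qualifies z p (Suc l)"
  with assms(1) obtain q where q: "q < p" "q + l \<le> length z" "p + l \<le> length z"
    and eq: "take l (drop q z) = take l (drop p z)"
    by (auto simp: lz_qualifies_def)
  obtain i where "i < l" and ne: "z ! (q + i) \<noteq> z ! (p + i)"
    using assms(2)[OF q] by blast
  have "take l (drop q z) ! i = take l (drop p z) ! i" by (simp only: eq)
  with \<open>i < l\<close> q have "z ! (q + i) = z ! (p + i)" by simp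
  with ne show False ..
qed

declare lz77_from.simps [simp del]

lemma lz77_from_ge: "length z \<le> p \<Longrightarrow> lz77_from z p = []"
  by (subst lz77_from.simps) simp

lemma length_lz77_from_phrase:
  assumes "phrase_len z p = l" and "p < length z"
  shows "length (lz77_from z p) = Suc (length (lz77_from z (p + l)))"
  using assms by (subst lz77_from.simps) simp

lemma length_lz77_from_equal_phrases:
  assumes "\<And>t. t < n \<Longrightarrow> phrase_len z (p + c * t) = c"
    and "p + c * n \<le> length z" and "0 < c"
  shows "length (lz77_from z p) = n + length (lz77_from z (p + c * n))"
  using assms
proof (induction n arbitrary: p)
  case 0
  then show ?case by simp
next
  case (Suc n)
  have "p < length z" using Suc.prems(2,3) by (simp add: add_less_le_mono)
  then have "length (lz77_from z p) = Suc (length (lz77_from z (p + c)))"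
    using Suc.prems(1)[of 0] by (intro length_lz77_from_phrase) simp_all
  also have "length (lz77_from z (p + c)) = n + length (lz77_from z (p + c + c * n))"
  proof (rule Suc.IH)
    fix t assume "t < n"
    then show "phrase_len z (p + c + c * t) = c"
      using Suc.prems(1)[of "Suc t"] by (simp add: algebra_simps)
  qed (use Suc.prems in \<open>simp_all add: algebra_simps\<close>)
  finally show ?case by (simp add: algebra_simps)
qed

lemma length_concat_map_const:
  "(\<And>t. t < n \<Longrightarrow> length (f t) = c) \<Longrightarrow> length (concat (map f [0..<n])) = c * n"
  by (induction n) auto

lemma nth_concat_map_const:
  assumes "\<And>t. t < n \<Longrightarrow> length (f t) = c" and "t < n" and "r < c"
  shows "concat (map f [0..<n]) ! (c * t + r) = f t ! r"
  using assms
proof (induction n)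
  case 0
  then show ?case by simp
next
  case (Suc n)
  have len: "length (concat (map f [0..<n])) = c * n"
    using Suc.prems(1) by (intro length_concat_map_const) auto
  show ?case
  proof (cases "t < n")
    case True
    have "c * t + r < c * n"
      using True Suc.prems(3) mult_le_mono2[of "Suc t" n c] by simp
    then show ?thesis using Suc True by (simp add: nth_append len)
  next
    case False
    with Suc.prems(2) have "t = n" by simp
    with Suc.prems show ?thesis by (simp add: nth_append len)
  qed
qed

lemma e_str_eq:
  "e_str N v i = (let p = Vx (N v ! ((i + length (N v) - 1) mod length (N v))) in
     [Pr v, p, Pr v, p, Pr v, p, Pr v, p, Pr v, Vx (N v ! (i mod length (N v)))])"
  by (simp add: e_str_def Let_def numeral_eq_Suc)

lemma length_e_str [simp]: "length (e_str N v i) = 10"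
  by (simp add: e_str_eq Let_def)

lemma e_str_nth:
  assumes "r < 10"
  shows "e_str N v i ! r = (if even r then Pr v else if r < 8
     then Vx (N v ! ((i + length (N v) - 1) mod length (N v))) else Vx (N v ! (i mod length (N v))))"
proof -
  have "r \<in> {0, 1, 2, 3, 4, 5, 6, 7, 8, 9}" using assms by auto
  then show ?thesis by (auto simp: e_str_eq Let_def)
qed

lemma length_s_str [simp]: "length (s_str v) = 10"
  by (simp add: s_str_def)

lemma s_str_nth: "r < 10 \<Longrightarrow> s_str v ! r = (if r < 4 then Vx v else if r < 9 then Pr v else Dl v)"
  by (auto simp: s_str_def numeral_eq_Suc less_Suc_eq)

lemma set_s_str: "set (s_str v) = {Vx v, Pr v, Dl v}"
  by (auto simp: s_str_def)

lemma set_E_block_subset: "set (E_block N v s) \<subseteq> insert (Pr v) (range Vx)"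
  by (auto simp: E_block_def e_str_eq Let_def)

lemma length_E_block [simp]: "length (E_block N v s) = 10 * length (N v)"
  unfolding E_block_def by (rule length_concat_map_const) simp

lemma E_block_nth:
  assumes "t < length (N v)" and "r < 10"
  shows "E_block N v s ! (10 * t + r) = (if even r then Pr v else if r < 8
     then Vx (N v ! ((s + t + length (N v) - 1) mod length (N v)))
     else Vx (N v ! ((s + t) mod length (N v))))"
proof -
  have "0 < length (N v)" using assms(1) by linarith
  then have pred: "(x mod length (N v) + length (N v) - 1) mod length (N v)
                   = (x + length (N v) - 1) mod length (N v)" for x
    by (metis Nat.add_diff_assoc One_nat_def Suc_leI mod_add_left_eq)
  have "E_block N v s ! (10 * t + r) = e_str N v ((s + t) mod length (N v)) ! r"
    unfolding E_block_def using assms by (intro nth_concat_map_const) auto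
  then show ?thesis by (simp only: e_str_nth[OF assms(2)] pred mod_mod_trivial)
qed

lemma last_E_block:
  assumes "0 < length (N v)"
  shows "last (E_block N v s) = Vx (N v ! ((s + length (N v) - 1) mod length (N v)))"
proof -
  define d where "d = length (N v)"
  have "E_block N v s \<noteq> []" using assms by (simp flip: length_greater_0_conv)
  moreover have "length (E_block N v s) - 1 = 10 * (d - 1) + 9"
    using assms unfolding d_def length_E_block by presburger
  ultimately have "last (E_block N v s) = E_block N v s ! (10 * (d - 1) + 9)"
    by (simp add: last_conv_nth)
  also have "\<dots> = Vx (N v ! ((s + (d - 1)) mod d))"
    using assms by (simp add: E_block_nth d_def)
  also have "s + (d - 1) = s + d - 1"
    using assms unfolding d_def by linarith
  finally show ?thesis by (simp add: d_def)
qed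

lemma mod_add_left_cancel_nat: "((a::nat) + x) mod n = (a + y) mod n \<longleftrightarrow> x mod n = y mod n"
  by (simp add: nat_mod_eq_iff)

section \<open>Parsing one block\<close>

locale block_layout =
  fixes N :: "'v \<Rightarrow> 'v list" and v :: 'v and s0 :: nat and A C z :: "'v sym list"
  assumes distinct_N: "distinct (N v)"
    and two_le_deg: "2 \<le> length (N v)"
    and Pr_notin_A: "Pr v \<notin> set A"
    and Dl_notin_A: "Dl v \<notin> set A"
    and last_A: "A \<noteq> [] \<Longrightarrow> last A = Vx v"
    and z_eq: "z = A @ s_str v @ E_block N v s0 @ C"
begin

abbreviation a :: nat where "a \<equiv> length A"
abbreviation d :: nat where "d \<equiv> length (N v)"

text \<open>E is e(v, nbr 0) e(v, nbr 1) ...; the cyclic predecessor of nbr t is nbr (t + d - 1).\<close>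
definition nbr :: "nat \<Rightarrow> 'v" where
  "nbr t = N v ! ((s0 + t) mod d)"

lemma length_z: "length z = a + 10 + 10 * d + length C"
  by (simp add: z_eq)

lemma z_nth_A: "q < a \<Longrightarrow> z ! q \<in> set A"
  by (simp add: z_eq nth_append)

lemma z_nth_s: "n < 10 \<Longrightarrow> z ! (a + n) = (if n < 4 then Vx v else if n < 9 then Pr v else Dl v)"
  by (simp add: z_eq nth_append s_str_nth)

lemma z_nth_E:
  assumes "q = a + 10 + 10 * t + r" and "t < d" and "r < 10"
  shows "z ! q = (if even r then Pr v else if r < 8 then Vx (nbr (t + d - 1)) else Vx (nbr t))"
proof -
  have "10 * t + r < 10 * d" using assms(2,3) by linarith
  with assms(1) have "z ! q = E_block N v s0 ! (10 * t + r)"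
    by (simp add: z_eq nth_append)
  with assms(2,3) show ?thesis by (simp add: E_block_nth nbr_def add.assoc)
qed

lemma E_position:
  assumes "a + 10 \<le> q" and "q < a + 10 + 10 * d"
  obtains t r where "q = a + 10 + 10 * t + r" and "t < d" and "r < 10"
proof
  let ?m = "q - a - 10"
  show "q = a + 10 + 10 * (?m div 10) + ?m mod 10" using assms(1) by simp
  show "?m div 10 < d" using assms by linarith
qed simp

lemma nbr_add_deg: "nbr (t + d) = nbr t"
  by (simp add: nbr_def add.assoc[symmetric])

lemma nbr_eq_iff: "nbr t = nbr t' \<longleftrightarrow> (s0 + t) mod d = (s0 + t') mod d"
proof -
  have "0 < d" using two_le_deg by linarith
  then show ?thesis unfolding nbr_def by (simp add: nth_eq_iff_index_eq[OF distinct_N])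
qed

lemma nbr_pred_neq: "nbr (t + d - 1) \<noteq> nbr t"
proof
  assume "nbr (t + d - 1) = nbr t"
  then have "(s0 + t + (d - 1)) mod d = (s0 + t + 0) mod d"
    using two_le_deg by (simp add: nbr_eq_iff add.assoc)
  then have "(d - 1) mod d = 0 mod d" by (simp only: mod_add_left_cancel_nat)
  then show False using two_le_deg by simp
qed

lemma nbr_inj: "t < d \<Longrightarrow> t' < d \<Longrightarrow> nbr t = nbr t' \<Longrightarrow> t = t'"
  by (simp add: nbr_eq_iff mod_add_left_cancel_nat)

lemma z_nth_before_even_E:
  assumes "t < d" and "r < 8" and "even r"
  shows "z ! (a + 9 + 10 * t + r) = (if t = 0 \<and> r = 0 then Dl v else Vx (nbr (t + d - 1)))"
proof (cases r)
  case 0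
  show ?thesis
  proof (cases t)
    case 0
    with \<open>r = 0\<close> show ?thesis using z_nth_s[of 9] by simp
  next
    case (Suc t')
    with \<open>r = 0\<close> assms(1) have "z ! (a + 9 + 10 * t + r) = Vx (nbr t')"
      by (simp add: z_nth_E[of _ t' 9])
    also have "nbr t' = nbr (t + d - 1)" using Suc nbr_add_deg by simp
    finally show ?thesis using Suc by simp
  qed
next
  case (Suc r')
  with assms show ?thesis by (simp add: z_nth_E[of _ t r'])
qed

text \<open>This is what stops the phrases inside E.\<close>
lemma edge_triple_fresh:
  assumes t: "t < d" and q: "q < a + 17 + 10 * t"
    and z0: "z ! q = Vx (nbr (t + d - 1))" and z1: "z ! (q + 1) = Pr v"
    and z2: "z ! (q + 2) = Vx (nbr t)"
  shows False
proof -
  have "q + 1 < a + 10 + 10 * d" using q t by linarith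
  then consider "q + 1 < a" | n where "q + 1 = a + n" "n < 10"
    | t' r' where "q + 1 = a + 10 + 10 * t' + r'" "t' < d" "r' < 10"
    by (metis E_position add_diff_inverse_nat add_less_cancel_left not_less)
  then show False
  proof cases
    case 1
    then show False using z_nth_A[of "q + 1"] z1 Pr_notin_A by simp
  next
    case (2 n)
    then have "4 \<le> n" "n < 9" using z_nth_s[of n] z1 by (auto split: if_splits)
    then show False using z_nth_s[of "Suc n"] z2 2 by (simp split: if_splits)
  next
    case (3 t' r')
    have "even r'" using z_nth_E[OF 3] z1 by (auto split: if_splits)
    show False
    proof (cases "r' = 8")
      case True
      then have "nbr t' = nbr t" using z_nth_E[of "q + 2" t' 9] 3 z2 by simp
      then have "t' = t" using nbr_inj 3 t by blast
      with True 3 q show False by simp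
    next
      case False
      with \<open>even r'\<close> \<open>r' < 10\<close> have "r' < 8" "r' + 1 < 8" by presburger+
      then have z2': "z ! (q + 2) = Vx (nbr (t' + d - 1))"
        using z_nth_E[of "q + 2" t' "r' + 1"] 3 \<open>even r'\<close> by simp
      have "q = a + 9 + 10 * t' + r'" using 3 by simp
      then have "z ! q = (if t' = 0 \<and> r' = 0 then Dl v else Vx (nbr (t' + d - 1)))"
        using z_nth_before_even_E 3 \<open>even r'\<close> \<open>r' < 8\<close> by blast
      with z0 have "nbr (t + d - 1) = nbr (t' + d - 1)" by (simp split: if_splits)
      moreover have "nbr t = nbr (t' + d - 1)" using z2 z2' by simp
      ultimately show False using nbr_pred_neq[of t] by simp
    qed
  qed
qed

lemma not_lz_qualifies_past_edge:
  assumes "t < d" and "p \<le> a + 17 + 10 * t" and "a + 20 + 10 * t \<le> p + l"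
  shows "\<not> lz_qualifies z p (Suc l)"
proof (rule not_lz_qualifiesI)
  show "1 \<le> l" using assms(2,3) by linarith
  fix q assume "q < p"
  define off where "off = a + 17 + 10 * t - p"
  show "\<exists>i<l. z ! (q + i) \<noteq> z ! (p + i)"
  proof (rule ccontr)
    assume no_diff: "\<not> ?thesis"
    have eq: "z ! (q + off + k) = z ! (a + 17 + 10 * t + k)" if "k < 3" for k
    proof -
      have "off + k < l" using that assms(2,3) by (simp add: off_def)
      with no_diff have "z ! (q + (off + k)) = z ! (p + (off + k))" by blast
      moreover have "p + (off + k) = a + 17 + 10 * t + k" using assms(2) by (simp add: off_def)
      ultimately show ?thesis by (simp add: add.assoc)
    qed
    show False
    proof (rule edge_triple_fresh[OF assms(1)])
      show "q + off < a + 17 + 10 * t" using \<open>q < p\<close> assms(2) by (simp add: off_def)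
      show "z ! (q + off) = Vx (nbr (t + d - 1))"
        using eq[of 0] z_nth_E[of "a + 17 + 10 * t + 0" t 7] assms(1) by simp
      show "z ! (q + off + 1) = Pr v"
        using eq[of 1] z_nth_E[of "a + 17 + 10 * t + 1" t 8] assms(1) by simp
      show "z ! (q + off + 2) = Vx (nbr t)"
        using eq[of 2] z_nth_E[of "a + 17 + 10 * t + 2" t 9] assms(1) by simp
    qed
  qed
qed

lemma phrase_len_first_block_0:
  assumes "A = []"
  shows "phrase_len z 0 = 1"
  using assms length_z by (intro phrase_len_eqI) (auto simp: lz_qualifies_def)

lemma phrase_len_first_block_1:
  assumes "A = []"
  shows "phrase_len z 1 = 4"
proof (rule phrase_len_eqI)
  show "lz_qualifies z 1 4"
    by (rule lz_qualifiesI[where q = 0]) (use assms length_z z_nth_s in auto)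
  show "\<not> lz_qualifies z 1 (Suc 4)"
    by (rule not_lz_qualifiesI) (use assms z_nth_s[of 3] z_nth_s[of 4] in \<open>auto intro!: exI[of _ 3]\<close>)
qed

lemma phrase_len_later_block:
  assumes "A \<noteq> []"
  shows "phrase_len z a = 5"
proof (rule phrase_len_eqI)
  have "0 < a" using assms by simp
  have "z ! (a - 1) = Vx v"
    using assms last_A by (simp add: z_eq nth_append last_conv_nth)
  then have "z ! (a - 1 + i) = z ! (a + i)" if "i < 4" for i
  proof (cases i)
    case 0
    then show ?thesis using \<open>z ! (a - 1) = Vx v\<close> z_nth_s[of 0] by simp
  next
    case (Suc n)
    have "a - 1 + i = a + n" using Suc \<open>0 < a\<close> by linarith
    then have "z ! (a - 1 + i) = z ! (a + n)" by (rule arg_cong)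
    then show ?thesis using z_nth_s[of n] z_nth_s[of i] that Suc by simp
  qed
  then show "lz_qualifies z a 5"
    using assms length_z by (intro lz_qualifiesI[where q = "a - 1"]) auto
  have "z ! (q + 4) \<noteq> Pr v" if "q < a" for q
  proof (cases "q + 4 < a")
    case True
    then show ?thesis using z_nth_A[of "q + 4"] Pr_notin_A by auto
  next
    case False
    then show ?thesis using z_nth_s[of "q + 4 - a"] that by simp
  qed
  then show "\<not> lz_qualifies z a (Suc 5)"
    using z_nth_s[of 4] by (intro not_lz_qualifiesI) (auto intro!: exI[of _ 4])
qed

lemma phrase_len_dollar:
  "phrase_len z (a + 5) = 5"
proof (rule phrase_len_eqI)
  show "lz_qualifies z (a + 5) 5"
    using length_z z_nth_s by (intro lz_qualifiesI[where q = "a + 4"]) (auto simp: add.assoc)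
  have "z ! (q + 4) \<noteq> Dl v" if "q < a + 5" for q
  proof (cases "q + 4 < a")
    case True
    then show ?thesis using z_nth_A[of "q + 4"] Dl_notin_A by auto
  next
    case False
    then show ?thesis using z_nth_s[of "q + 4 - a"] that by simp
  qed
  then show "\<not> lz_qualifies z (a + 5) (Suc 5)"
    using z_nth_s[of 9] by (intro not_lz_qualifiesI) (auto simp: add.commute intro!: exI[of _ 4])
qed

lemma phrase_len_E_first: "phrase_len z (a + 10) = 2"
proof (rule phrase_len_eqI)
  have d: "0 < d" using two_le_deg by linarith
  show "lz_qualifies z (a + 10) 2"
  proof (rule lz_qualifiesI[where q = "a + 8"])
    show "a + 10 + 2 \<le> length z" using length_z two_le_deg by linarith
    have "z ! (a + 8) = Pr v" using z_nth_s[of 8] by simp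
    moreover have "z ! (a + 10) = Pr v" using z_nth_E[of "a + 10" 0 0] d by simp
    ultimately show "z ! (a + 8 + i) = z ! (a + 10 + i)" if "i < 2 - 1" for i
      using that by simp
  qed simp_all
  have fresh: "z ! q \<noteq> Pr v \<or> z ! (q + 1) \<noteq> Vx (nbr (d - 1))" if "q < a + 10" for q
  proof (cases "q < a")
    case True
    then show ?thesis using z_nth_A[of q] Pr_notin_A by auto
  next
    case False
    define n where "n = q - a"
    have n: "q = a + n" "n < 10" using False that by (simp_all add: n_def)
    show ?thesis
    proof (cases "4 \<le> n \<and> n < 9")
      case True
      then have "z ! (q + 1) \<in> {Pr v, Dl v}" using z_nth_s[of "Suc n"] n by auto
      then show ?thesis by auto
    next
      case False
      then have "z ! q \<noteq> Pr v" using z_nth_s[of n] n by auto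
      then show ?thesis ..
    qed
  qed
  show "\<not> lz_qualifies z (a + 10) (Suc 2)"
  proof (rule not_lz_qualifiesI)
    fix q assume "q < a + 10"
    then consider "z ! q \<noteq> Pr v" | "z ! (q + 1) \<noteq> Vx (nbr (d - 1))" using fresh by blast
    then show "\<exists>i<2. z ! (q + i) \<noteq> z ! (a + 10 + i)"
    proof cases
      case 1
      then show ?thesis using z_nth_E[of "a + 10" 0 0] d by (intro exI[of _ 0]) simp
    next
      case 2
      then show ?thesis using z_nth_E[of "a + 10 + 1" 0 1] d by (intro exI[of _ 1]) simp
    qed
  qed simp
qed

lemma phrase_len_E_second: "phrase_len z (a + 12) = 8"
proof (rule phrase_len_eqI)
  have d: "0 < d" using two_le_deg by linarith
  have "z ! (a + 10 + i) = z ! (a + 12 + i)" if "i < 7" for i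
  proof -
    have "odd i \<Longrightarrow> i + 2 < 8" using that by presburger
    then show ?thesis
      using that d z_nth_E[of "a + 10 + i" 0 i] z_nth_E[of "a + 12 + i" 0 "i + 2"] by auto
  qed
  then show "lz_qualifies z (a + 12) 8"
    using length_z two_le_deg by (intro lz_qualifiesI[where q = "a + 10"]) auto
  show "\<not> lz_qualifies z (a + 12) (Suc 8)"
    using d by (intro not_lz_qualifies_past_edge[where t = 0]) auto
qed

lemma phrase_len_E_later:
  assumes "1 \<le> t" and "t < d"
  shows "phrase_len z (a + 10 + 10 * t) = 10"
proof (rule phrase_len_eqI)
  have "z ! (a + 8 + 10 * t + i) = z ! (a + 10 + 10 * t + i)" if "i < 9" for i
  proof (cases "i < 2")
    case True
    have "a + 8 + 10 * t + i = a + 10 + 10 * (t - 1) + (8 + i)" using assms by simp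
    then have "z ! (a + 8 + 10 * t + i) = (if even i then Pr v else Vx (nbr (t - 1)))"
      using True assms z_nth_E[of "a + 8 + 10 * t + i" "t - 1" "8 + i"] by simp
    moreover have "nbr (t - 1) = nbr (t + d - 1)"
      using assms nbr_add_deg[of "t - 1"] by simp
    ultimately show ?thesis using True assms z_nth_E[of "a + 10 + 10 * t + i" t i] by simp
  next
    case False
    moreover have "odd i \<Longrightarrow> i < 8" and "i - 2 < 8" using that by presburger+
    ultimately show ?thesis
      using that assms z_nth_E[of "a + 8 + 10 * t + i" t "i - 2"] z_nth_E[of "a + 10 + 10 * t + i" t i]
      by simp
  qed
  then show "lz_qualifies z (a + 10 + 10 * t) 10"
    using length_z assms by (intro lz_qualifiesI[where q = "a + 8 + 10 * t"]) auto
  show "\<not> lz_qualifies z (a + 10 + 10 * t) (Suc 10)"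
    using assms by (intro not_lz_qualifies_past_edge[where t = t]) auto
qed

lemma length_lz77_from_E:
  "length (lz77_from z (a + 10)) = Suc d + length (lz77_from z (a + 10 + 10 * d))"
proof -
  have "length (lz77_from z (a + 10)) = Suc (length (lz77_from z (a + 10 + 2)))"
    using two_le_deg length_z by (intro length_lz77_from_phrase phrase_len_E_first) linarith
  also have "a + 10 + 2 = a + 12" by simp
  also have "length (lz77_from z (a + 12)) = Suc (length (lz77_from z (a + 12 + 8)))"
    using two_le_deg length_z by (intro length_lz77_from_phrase phrase_len_E_second) simp
  also have "a + 12 + 8 = a + 20" by simp
  also have "length (lz77_from z (a + 20)) = (d - 1) + length (lz77_from z (a + 20 + 10 * (d - 1)))"
  proof (rule length_lz77_from_equal_phrases)
    fix t assume "t < d - 1"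
    then show "phrase_len z (a + 20 + 10 * t) = 10"
      using phrase_len_E_later[of "Suc t"] by (simp add: algebra_simps)
  next
    show "a + 20 + 10 * (d - 1) \<le> length z" using length_z two_le_deg by linarith
  qed simp
  also have "a + 20 + 10 * (d - 1) = a + 10 + 10 * d" using two_le_deg by simp
  finally show ?thesis using two_le_deg by simp
qed

lemma length_lz77_from_block:
  "length (lz77_from z a) = (if A = [] then 3 else 2) + Suc d + length (lz77_from z (a + 10 + 10 * d))"
proof -
  have "length (lz77_from z (a + 5)) = Suc (length (lz77_from z (a + 5 + 5)))"
    using length_z by (intro length_lz77_from_phrase phrase_len_dollar) simp
  then have s: "length (lz77_from z (a + 5)) = Suc (length (lz77_from z (a + 10)))"
    by (simp add: add.assoc)
  show ?thesis
  proof (cases "A = []")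
    case True
    then have "length (lz77_from z 0) = Suc (Suc (length (lz77_from z (0 + 1 + 4))))"
      using length_z length_lz77_from_phrase[OF phrase_len_first_block_0]
        length_lz77_from_phrase[OF phrase_len_first_block_1] by simp
    with True s length_lz77_from_E show ?thesis by simp
  next
    case False
    then have "length (lz77_from z a) = Suc (length (lz77_from z (a + 5)))"
      using length_z two_le_deg by (intro length_lz77_from_phrase phrase_len_later_block) simp_all
    with False s length_lz77_from_E show ?thesis by simp
  qed
qed

end

section \<open>Parsing the whole string Y\<close>

locale path_string =
  fixes N :: "'v \<Rightarrow> 'v list" and vs :: "'v list" and j :: nat
  assumes distinct_N: "\<And>v. distinct (N v)"
    and vs_nonempty: "vs \<noteq> []"
    and distinct_vs: "distinct vs"
    and path_edges: "\<And>i. Suc i < length vs \<Longrightarrow> vs ! Suc i \<in> set (N (vs ! i))"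
    and two_le_deg: "\<And>i. i < length vs \<Longrightarrow> 2 \<le> length (N (vs ! i))"
begin

definition block_start :: "nat \<Rightarrow> nat" where
  "block_start i = (if Suc i < length vs then Suc (nb_index N (vs ! i) (vs ! Suc i)) else j)"

definition Y_block :: "nat \<Rightarrow> 'v sym list" where
  "Y_block i = s_str (vs ! i) @ E_block N (vs ! i) (block_start i)"

definition Y_prefix :: "nat \<Rightarrow> 'v sym list" where
  "Y_prefix k = concat (map Y_block [0..<k])"

lemma Y_str_split:
  assumes "k < length vs"
  shows "Y_str N vs j = Y_prefix k @ s_str (vs ! k) @ E_block N (vs ! k) (block_start k)
                        @ concat (map Y_block [Suc k..<length vs])"
proof -
  have "[0..<length vs] = [0..<k] @ [k..<length vs]"
    using upt_add_eq_append[of 0 k "length vs - k"] assms by simp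
  also have "[k..<length vs] = k # [Suc k..<length vs]"
    using assms by (simp add: upt_conv_Cons)
  moreover have "Y_str N vs j = concat (map Y_block [0..<length vs])"
    unfolding Y_str_def Y_block_def block_start_def by (simp add: if_distrib)
  ultimately show ?thesis by (simp add: Y_prefix_def Y_block_def)
qed

lemma length_Y_prefix_Suc:
  "length (Y_prefix (Suc k)) = length (Y_prefix k) + 10 + 10 * length (N (vs ! k))"
  by (simp add: Y_prefix_def Y_block_def)

lemma Y_prefix_eq_Nil_iff: "Y_prefix k = [] \<longleftrightarrow> k = 0"
  by (cases k) (simp_all add: Y_prefix_def Y_block_def s_str_def)

lemma Pr_Dl_in_Y_prefix:
  assumes "Pr u \<in> set (Y_prefix k) \<or> Dl u \<in> set (Y_prefix k)"
  shows "\<exists>i<k. u = vs ! i"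
  using assms set_E_block_subset
  by (fastforce simp: Y_prefix_def Y_block_def set_s_str)

lemma Pr_Dl_notin_Y_prefix:
  assumes "k < length vs"
  shows "Pr (vs ! k) \<notin> set (Y_prefix k)" and "Dl (vs ! k) \<notin> set (Y_prefix k)"
  using Pr_Dl_in_Y_prefix[of "vs ! k" k] assms distinct_vs
  by (force simp: nth_eq_iff_index_eq)+

lemma last_Y_prefix:
  assumes "k < length vs" and "Y_prefix k \<noteq> []"
  shows "last (Y_prefix k) = Vx (vs ! k)"
proof -
  obtain i where k: "k = Suc i" using assms(2) Y_prefix_eq_Nil_iff not0_implies_Suc by blast
  define u where "u = vs ! i"
  define n where "n = nb_index N u (vs ! k)"
  have edge: "vs ! k \<in> set (N u)" using path_edges[of i] assms(1) k by (simp add: u_def)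
  then have n: "n < length (N u)" "N u ! n = vs ! k"
    using theI'[OF distinct_Ex1[OF distinct_N edge]] by (simp_all add: n_def nb_index_def)
  have "0 < length (N u)" using n by linarith
  then have "E_block N u (block_start i) \<noteq> []"
    by (simp flip: length_greater_0_conv)
  then have "last (Y_prefix k) = last (E_block N u (Suc n))"
    using assms(1) k by (simp add: Y_prefix_def Y_block_def block_start_def u_def n_def)
  also have "\<dots> = Vx (N u ! ((n + length (N u)) mod length (N u)))"
    using last_E_block[of N u, OF \<open>0 < length (N u)\<close>] by simp
  finally show ?thesis using n by simp
qed

lemma block_layout_at:
  assumes "k < length vs"
  shows "block_layout N (vs ! k) (block_start k) (Y_prefix k)
           (concat (map Y_block [Suc k..<length vs])) (Y_str N vs j)"
  using assms distinct_N two_le_deg Pr_Dl_notin_Y_prefix last_Y_prefix Y_str_split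
  by unfold_locales auto

lemma length_lz77_from_Y_prefix:
  assumes "k \<le> length vs"
  shows "length (lz77_from (Y_str N vs j) (length (Y_prefix k)))
           = (if k = 0 then 1 else 0) + 3 * (length vs - k) + (\<Sum>i = k..<length vs. length (N (vs ! i)))"
  using assms
proof (induction k rule: inc_induct)
  case base
  have "length (Y_prefix (length vs)) = length (Y_str N vs j)"
    using Y_str_split[of "length vs - 1"] vs_nonempty length_Y_prefix_Suc[of "length vs - 1"]
    by (simp add: Y_block_def)
  then show ?case using vs_nonempty by (simp add: lz77_from_ge)
next
  case (step k)
  interpret block_layout N "vs ! k" "block_start k" "Y_prefix k"
    "concat (map Y_block [Suc k..<length vs])" "Y_str N vs j"
    using step.hyps(2) by (rule block_layout_at)
  have "length vs - k = Suc (length vs - Suc k)" using step.hyps(2) by simp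
  then show ?case
    using length_lz77_from_block step.IH step.hyps(2)
    by (simp add: Y_prefix_eq_Nil_iff length_Y_prefix_Suc sum.atLeast_Suc_lessThan)
qed

lemma length_lz77_Y_str:
  "length (lz77 (Y_str N vs j)) = 3 * length vs + 1 + (\<Sum>v\<leftarrow>vs. length (N v))"
proof -
  have "length (lz77 (Y_str N vs j)) = 1 + 3 * length vs + (\<Sum>i = 0..<length vs. length (N (vs ! i)))"
    using length_lz77_from_Y_prefix[of 0] by (simp add: lz77_def Y_prefix_def)
  moreover have "(\<Sum>v\<leftarrow>vs. length (N v)) = (\<Sum>i = 0..<length vs. length (N (vs ! i)))"
    by (simp add: sum_list_sum_nth)
  ultimately show ?thesis by simp
qed

end

theorem lemma9:
  fixes N :: "'v \<Rightarrow> 'v list" and vs :: "'v list" and j :: nat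
  assumes cyclic_order: "\<And>v. distinct (N v)"
    and no_loops: "\<And>v. v \<notin> set (N v)"
    and no_outdeg_one: "\<And>v. outdeg N v \<noteq> 1"
    and path_nonempty: "vs \<noteq> []"
    and path_distinct: "distinct vs"
    and path_edges: "\<And>i. Suc i < length vs \<Longrightarrow> vs ! Suc i \<in> set (N (vs ! i))"
    and last_deg: "outdeg N (last vs) \<ge> 1"
    and start: "j < outdeg N (last vs)"
  shows "length (lz77 (Y_str N vs j)) = 3 * length vs + 1 + (\<Sum>v\<leftarrow>vs. outdeg N v)"
proof -
  have "2 \<le> length (N (vs ! i))" if "i < length vs" for i
  proof -
    have "0 < length (N (vs ! i))"
    proof (cases "Suc i < length vs")
      case True
      then show ?thesis using path_edges[of i] by (auto simp flip: length_greater_0_conv)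
    next
      case False
      with that have "i = length vs - 1" by simp
      then have "vs ! i = last vs" using path_nonempty by (simp add: last_conv_nth)
      then show ?thesis using last_deg by (simp add: outdeg_def Suc_le_eq)
    qed
    moreover have "length (N (vs ! i)) \<noteq> 1" using no_outdeg_one by (simp add: outdeg_def)
    ultimately show ?thesis by linarith
  qed
  then interpret path_string N vs j
    using cyclic_order path_nonempty path_distinct path_edges by unfold_locales
  show ?thesis using length_lz77_Y_str by (simp add: outdeg_def)
qed

end
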